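(* Let $\alpha>-1$ and $n\in\mathbb{N}=\{1,2,\dots\}$, and let $t_1<\dots<t_n$ be the zeros of $L_n^{(\alpha)}$. Then $$\|\ell_n^{(\alpha)}\|_1=\int_0^\infty|\ell_n^{(\alpha)}(t)|\,dt=2\sum_{m=1}^n(-1)^{m+1}\ell_{n-1}^{(\alpha)}(t_m),$$ and $$\int_0^\infty t^{n-1}|\ell_n^{(\alpha)}(t)|\,dt=\frac{2}{\alpha+n}\sum_{m=1}^n(-1)^{m+1}t_m^{n}\,\ell_{n-1}^{(\alpha)}(t_m).$$
   Context: The generalized Laguerre polynomials are $L_n^{(\alpha)}(t)=\sum_{k=0}^n(-1)^k\binom{n+\alpha}{n-k}\frac{t^k}{k!}$, and the Laguerre functions are $\ell_n^{(\alpha)}(t)=\frac{n!}{\Gamma(n+\alpha+1)}t^{\alpha}e^{-t}L_n^{(\alpha)}(t)$ for $t>0$. *)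

theory Defs
  imports "HOL-Analysis.Analysis"
begin

definition laguerre :: "nat \<Rightarrow> real \<Rightarrow> real \<Rightarrow> real" where
  "laguerre n \<alpha> t = (\<Sum>k=0..n. (-1)^k * ((real n + \<alpha>) gchoose (n - k)) * t ^ k / fact k)"

definition laguerre_fun :: "nat \<Rightarrow> real \<Rightarrow> real \<Rightarrow> real" where
  "laguerre_fun n \<alpha> t = fact n / Gamma (real n + \<alpha> + 1) * t powr \<alpha> * exp (- t) * laguerre n \<alpha> t"

end

theory Submission
  imports Defs "HOL-Computational_Algebra.Polynomial" "HOL-Real_Asymp.Real_Asymp"
begin

(*
  Write n = m + 1. The Laguerre function l_m^(alpha+1) is an antiderivative of l_n^(alpha), and
  x^n l_m^(alpha) / (alpha + n) is one of x^m l_n^(alpha); both vanish at 0 and at infinity since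
  alpha > -1. The n distinct zeros t_1 < ... < t_n of L_n^(alpha) are positive and simple, so
  l_n^(alpha) has sign (-1)^k between t_k and t_(k+1) (with t_0 = 0, t_(n+1) = infinity), and
  integrating the absolute value piece by piece telescopes to 2 * sum (-1)^(k+1) F(t_k) for the
  antiderivative F. In the first case the three-term relation
  l_m^(alpha+1) = l_m^(alpha) - l_n^(alpha) turns l_m^(alpha+1)(t_k) into l_m^(alpha)(t_k).
  All derivative and three-term identities come down to identities between generalized binomial
  coefficients, compared coefficientwise.
*)

definition laguerre_coeff :: "nat \<Rightarrow> real \<Rightarrow> nat \<Rightarrow> real" where
  "laguerre_coeff n \<beta> k = (if k \<le> n then (real n + \<beta>) gchoose (n - k) else 0)"

definition laguerre_poly :: "nat \<Rightarrow> real \<Rightarrow> real poly" where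
  "laguerre_poly n \<beta> = (\<Sum>k\<le>n. monom ((-1)^k * laguerre_coeff n \<beta> k / fact k) k)"

lemma coeff_laguerre_poly: "coeff (laguerre_poly n \<beta>) k = (-1)^k * laguerre_coeff n \<beta> k / fact k"
  by (auto simp: laguerre_poly_def coeff_sum coeff_monom laguerre_coeff_def)

lemma poly_laguerre_poly: "poly (laguerre_poly n \<beta>) x = laguerre n \<beta> x"
  by (auto simp: laguerre_poly_def poly_sum poly_monom laguerre_coeff_def laguerre_def
                 atLeast0AtMost intro!: sum.cong)

lemma degree_laguerre_poly: "degree (laguerre_poly n \<beta>) = n"
  by (intro antisym degree_le le_degree) (auto simp: coeff_laguerre_poly laguerre_coeff_def)

lemma lead_coeff_laguerre_poly: "lead_coeff (laguerre_poly n \<beta>) = (-1)^n / fact n"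
  by (simp add: degree_laguerre_poly coeff_laguerre_poly laguerre_coeff_def)

section \<open>Differential and three-term identities\<close>

lemma nat_cases_Suc_less:
  fixes k m :: nat
  obtains "k = 0" | i where "k = Suc i" "i < m" | "k = Suc m" | "k > Suc m"
  by (metis less_Suc_eq not0_implies_Suc not_less_eq)

lemma laguerre_coeff_Suc_alpha:
  "(\<alpha> + 1 + real k) * laguerre_coeff m (\<alpha> + 1) k + real k * laguerre_coeff m (\<alpha> + 1) (k - 1)
     = real (Suc m) * laguerre_coeff (Suc m) \<alpha> k"
proof -
  define N where "N = real m + \<alpha> + 1"
  have [simp]: "real m + (\<alpha> + 1) = N" "real (Suc m) + \<alpha> = N" "1 + real m + \<alpha> = N"
    by (simp_all add: N_def)
  show ?thesis
  proof (cases rule: nat_cases_Suc_less[where k=k and m=m])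
    case 1
    have "(N - real m) * (N gchoose m) = real (Suc m) * (N gchoose Suc m)"
      using gbinomial_mult_1[of N m] by (simp add: algebra_simps)
    moreover have "N - real m = \<alpha> + 1" by (simp add: N_def)
    ultimately show ?thesis using 1 by (simp add: laguerre_coeff_def)
  next
    case (2 i)
    define K where "K = m - Suc i"
    have K: "m - i = Suc K" "Suc m - Suc i = Suc K" "m - Suc i = K"
      using 2 by (auto simp: K_def)
    have "(N - real K) * (N gchoose K) = real (Suc K) * (N gchoose Suc K)"
      using gbinomial_mult_1[of N K] by (simp add: algebra_simps)
    moreover have "N - real K = \<alpha> + 1 + real (Suc i)" using 2 by (simp add: N_def K_def)
    ultimately show ?thesis using 2 by (simp add: laguerre_coeff_def K) (simp add: K_def algebra_simps)
  qed (auto simp: laguerre_coeff_def)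
qed

lemma laguerre_coeff_three_term:
  "real (Suc m) * laguerre_coeff (Suc m) \<alpha> k
     = (real m + \<alpha> + 1) * laguerre_coeff m \<alpha> k + real k * laguerre_coeff m (\<alpha> + 1) (k - 1)"
proof -
  define N where "N = real m + \<alpha> + 1"
  have [simp]: "real m + (\<alpha> + 1) = N" "real (Suc m) + \<alpha> = N" "1 + real m + \<alpha> = N"
    "real m + \<alpha> = N - 1" "real m + \<alpha> + 1 = N"
    by (simp_all add: N_def)
  show ?thesis
  proof (cases rule: nat_cases_Suc_less[where k=k and m=m])
    case 1
    have "real (Suc m) * (N gchoose Suc m) = N * ((N - 1) gchoose m)"
      by (rule gbinomial_absorption)
    with 1 show ?thesis by (simp add: laguerre_coeff_def)
  next
    case (2 i)
    define K where "K = m - Suc i"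
    have K: "m - i = Suc K" "Suc m - Suc i = Suc K" "m - Suc i = K"
      using 2 by (auto simp: K_def)
    have "real (Suc K) * (N gchoose Suc K) = N * ((N - 1) gchoose K)"
      by (rule gbinomial_absorption)
    then show ?thesis using 2 by (simp add: laguerre_coeff_def K) (simp add: K_def algebra_simps)
  qed (auto simp: laguerre_coeff_def)
qed

lemma laguerre_coeff_shift:
  "(\<alpha> + real m + 1 + real k) * laguerre_coeff m \<alpha> k + real k * laguerre_coeff m \<alpha> (k - 1)
     = real (Suc m) * laguerre_coeff (Suc m) \<alpha> k"
proof -
  define N where "N = real m + \<alpha> + 1"
  have [simp]: "real (Suc m) + \<alpha> = N" "1 + real m + \<alpha> = N" "real m + \<alpha> = N - 1" "\<alpha> + real m + 1 = N"
    by (simp_all add: N_def)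
  show ?thesis
  proof (cases rule: nat_cases_Suc_less[where k=k and m=m])
    case 1
    have "real (Suc m) * (N gchoose Suc m) = N * ((N - 1) gchoose m)"
      by (rule gbinomial_absorption)
    with 1 show ?thesis by (simp add: laguerre_coeff_def)
  next
    case (2 i)
    define K where "K = m - Suc i"
    have K: "m - i = Suc K" "Suc m - Suc i = Suc K" "m - Suc i = K"
      using 2 by (auto simp: K_def)
    have "real (Suc K) * (N gchoose Suc K) = N * ((N - 1) gchoose K)"
      by (rule gbinomial_absorption)
    moreover have "N gchoose Suc K = ((N - 1) gchoose K) + ((N - 1) gchoose Suc K)"
      using gbinomial_Suc_Suc[of "N - 1" K] by simp
    ultimately show ?thesis using 2 by (simp add: laguerre_coeff_def K) (simp add: K_def algebra_simps)
  qed (auto simp: laguerre_coeff_def)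
qed

lemma signed_coeff_laguerre_poly:
  "(-1)^k * fact k * coeff (laguerre_poly n \<beta>) k = laguerre_coeff n \<beta> k"
  by (simp add: coeff_laguerre_poly flip: power_mult_distrib)

lemma signed_fact_Suc: "(-1)^Suc i * fact (Suc i) * x = - (real i + 1) * ((-1)^i * fact i * (x::real))"
  by (simp add: algebra_simps)

lemma signed_coeff_pCons_laguerre_poly:
  "(-1)^k * fact k * coeff (pCons 0 (laguerre_poly n \<beta>)) k = - real k * laguerre_coeff n \<beta> (k - 1)"
  by (cases k) (simp_all only: signed_fact_Suc signed_coeff_laguerre_poly coeff_pCons_Suc, simp_all)

definition weighted_pderiv :: "real \<Rightarrow> real poly \<Rightarrow> real poly" where
  "weighted_pderiv \<gamma> R = smult (\<gamma> + 1) R - pCons 0 R + pCons 0 (pderiv R)"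

lemma has_real_derivative_powr_exp_poly:
  fixes \<gamma> :: real and R :: "real poly"
  assumes "x > 0"
  shows "((\<lambda>x. x powr (\<gamma> + 1) * exp (- x) * poly R x) has_real_derivative
           x powr \<gamma> * exp (- x) * poly (weighted_pderiv \<gamma> R) x) (at x)"
proof -
  have "((\<lambda>x. x powr (\<gamma> + 1) * exp (- x) * poly R x) has_real_derivative
      ((\<gamma> + 1) * x powr \<gamma> * exp (- x) - x powr (\<gamma> + 1) * exp (- x)) * poly R x
      + x powr (\<gamma> + 1) * exp (- x) * poly (pderiv R) x) (at x)"
    using assms by (auto intro!: derivative_eq_intros simp: algebra_simps)
  moreover have "x powr (\<gamma> + 1) = x powr \<gamma> * x" using assms by (simp add: powr_add)
  ultimately show ?thesis by (simp add: weighted_pderiv_def algebra_simps)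
qed

lemma signed_coeff_weighted_pderiv_laguerre_poly:
  "(-1)^k * fact k * coeff (weighted_pderiv \<gamma> (laguerre_poly n \<beta>)) k
     = (\<gamma> + 1 + real k) * laguerre_coeff n \<beta> k + real k * laguerre_coeff n \<beta> (k - 1)"
proof (cases k)
  case (Suc i)
  have "coeff (weighted_pderiv \<gamma> (laguerre_poly n \<beta>)) k
      = (\<gamma> + 1 + real k) * coeff (laguerre_poly n \<beta>) k - coeff (laguerre_poly n \<beta>) i"
    using Suc by (simp add: weighted_pderiv_def coeff_pderiv algebra_simps)
  then have "(-1)^k * fact k * coeff (weighted_pderiv \<gamma> (laguerre_poly n \<beta>)) k
      = (\<gamma> + 1 + real k) * ((-1)^k * fact k * coeff (laguerre_poly n \<beta>) k)
        - (-1)^Suc i * fact (Suc i) * coeff (laguerre_poly n \<beta>) i"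
    unfolding Suc by (simp only: right_diff_distrib ac_simps)
  then show ?thesis
    by (simp only: signed_fact_Suc signed_coeff_laguerre_poly) (simp add: Suc algebra_simps)
qed (simp add: weighted_pderiv_def signed_coeff_laguerre_poly[of 0, simplified])

lemma poly_eq_by_signed_coeff:
  fixes p q :: "real poly"
  assumes "\<And>k. (-1)^k * fact k * coeff p k = (-1)^k * fact k * coeff q k"
  shows "p = q"
  using assms by (intro poly_eqI) simp

lemma signed_coeff_smult:
  "(-1)^k * fact k * coeff (smult c p) k = c * ((-1)^k * fact k * coeff p k)"
  by (simp add: algebra_simps)

lemma weighted_pderiv_laguerre_poly_Suc_alpha:
  "weighted_pderiv \<alpha> (laguerre_poly m (\<alpha> + 1)) = smult (real (Suc m)) (laguerre_poly (Suc m) \<alpha>)"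
  by (rule poly_eq_by_signed_coeff) (simp only: signed_coeff_smult signed_coeff_weighted_pderiv_laguerre_poly
        signed_coeff_laguerre_poly laguerre_coeff_Suc_alpha)

lemma weighted_pderiv_laguerre_poly_shift:
  "weighted_pderiv (\<alpha> + real m) (laguerre_poly m \<alpha>) = smult (real (Suc m)) (laguerre_poly (Suc m) \<alpha>)"
  by (rule poly_eq_by_signed_coeff) (simp only: signed_coeff_smult signed_coeff_weighted_pderiv_laguerre_poly
        signed_coeff_laguerre_poly laguerre_coeff_shift)

lemma pCons_laguerre_poly_Suc_alpha:
  "pCons 0 (laguerre_poly m (\<alpha> + 1))
     = smult (real m + \<alpha> + 1) (laguerre_poly m \<alpha>) - smult (real (Suc m)) (laguerre_poly (Suc m) \<alpha>)"
  by (rule poly_eq_by_signed_coeff)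
     (unfold coeff_diff right_diff_distrib signed_coeff_smult signed_coeff_laguerre_poly
        signed_coeff_pCons_laguerre_poly laguerre_coeff_three_term, simp)

lemma tendsto_powr_exp_poly_at_right_0:
  fixes \<gamma> :: real and R :: "real poly"
  assumes "\<gamma> > 0"
  shows "((\<lambda>x. x powr \<gamma> * exp (- x) * poly R x) \<longlongrightarrow> 0) (at_right 0)"
proof -
  have "((\<lambda>x::real. x powr \<gamma> * exp (- x)) \<longlongrightarrow> 0) (at_right 0)"
    using assms by real_asymp
  moreover have "(poly R \<longlongrightarrow> poly R 0) (at_right 0)"
    by (intro tendsto_intros)
  ultimately show ?thesis using tendsto_mult by fastforce
qed

lemma tendsto_powr_exp_poly_at_top:
  fixes \<gamma> :: real and R :: "real poly"
  shows "((\<lambda>x. x powr \<gamma> * exp (- x) * poly R x) \<longlongrightarrow> 0) at_top"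
proof -
  have "((\<lambda>x::real. x powr \<gamma> * exp (- x) * x ^ i) \<longlongrightarrow> 0) at_top" for i
    by real_asymp
  then have "((\<lambda>x. \<Sum>i\<le>degree R. coeff R i * (x powr \<gamma> * exp (- x) * x ^ i)) \<longlongrightarrow> 0) at_top"
    by (intro tendsto_null_sum tendsto_mult_right_zero)
  then show ?thesis
    by (simp add: poly_altdef sum_distrib_left algebra_simps)
qed

lemma laguerre_fun_altdef:
  "laguerre_fun n \<alpha> x
     = fact n / Gamma (real n + \<alpha> + 1) * (x powr \<alpha> * exp (- x) * poly (laguerre_poly n \<alpha>) x)"
  by (simp add: laguerre_fun_def poly_laguerre_poly)

lemma Gamma_Suc_plus:
  assumes "\<alpha> > -1"
  shows "Gamma (real (Suc m) + \<alpha> + 1) = (real m + \<alpha> + 1) * Gamma (real m + \<alpha> + 1)"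
proof -
  have "real m + \<alpha> + 1 \<notin> \<int>\<^sub>\<le>\<^sub>0"
    using assms nonpos_Ints_nonpos by fastforce
  then show ?thesis using Gamma_plus1[of "real m + \<alpha> + 1"] by (simp add: add_ac)
qed

lemma has_real_derivative_laguerre_fun_Suc_alpha:
  assumes "x > 0"
  shows "(laguerre_fun m (\<alpha> + 1) has_real_derivative laguerre_fun (Suc m) \<alpha> x) (at x)"
proof -
  define c where "c = fact m / Gamma (real (Suc m) + \<alpha> + 1)"
  have "laguerre_fun m (\<alpha> + 1) = (\<lambda>x. c * (x powr (\<alpha> + 1) * exp (- x) * poly (laguerre_poly m (\<alpha> + 1)) x))"
    by (simp add: laguerre_fun_altdef c_def add_ac fun_eq_iff)
  moreover have "(\<dots> has_real_derivative
      c * (x powr \<alpha> * exp (- x) * poly (weighted_pderiv \<alpha> (laguerre_poly m (\<alpha> + 1))) x)) (at x)"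
    by (intro DERIV_cmult has_real_derivative_powr_exp_poly assms)
  moreover have "c * (x powr \<alpha> * exp (- x) * poly (weighted_pderiv \<alpha> (laguerre_poly m (\<alpha> + 1))) x)
      = laguerre_fun (Suc m) \<alpha> x"
    by (simp add: weighted_pderiv_laguerre_poly_Suc_alpha laguerre_fun_altdef c_def)
  ultimately show ?thesis by simp
qed

lemma laguerre_fun_Suc_alpha:
  assumes "\<alpha> > -1" and "x > 0"
  shows "laguerre_fun m (\<alpha> + 1) x = laguerre_fun m \<alpha> x - laguerre_fun (Suc m) \<alpha> x"
proof -
  define N where "N = real m + \<alpha> + 1"
  define w where "w = x powr \<alpha> * exp (- x)"
  have N: "N > 0" using assms by (simp add: N_def)
  have G: "Gamma (real m + (\<alpha> + 1) + 1) = N * Gamma N" "Gamma (real (Suc m) + \<alpha> + 1) = N * Gamma N"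
    using Gamma_Suc_plus[OF assms(1), of m] by (simp_all add: N_def add_ac)
  have "x powr (\<alpha> + 1) = x powr \<alpha> * x" using assms(2) by (simp add: powr_add)
  then have l1: "laguerre_fun m (\<alpha> + 1) x = fact m / (N * Gamma N) * (w * (x * poly (laguerre_poly m (\<alpha> + 1)) x))"
    unfolding laguerre_fun_altdef G(1) w_def by simp
  have l0: "laguerre_fun m \<alpha> x = fact m / Gamma N * (w * poly (laguerre_poly m \<alpha>) x)"
    by (simp add: laguerre_fun_altdef N_def w_def)
  have l2: "laguerre_fun (Suc m) \<alpha> x = real (Suc m) * fact m / (N * Gamma N) * (w * poly (laguerre_poly (Suc m) \<alpha>) x)"
    unfolding laguerre_fun_altdef G(2) w_def by simp
  have xQ: "x * poly (laguerre_poly m (\<alpha> + 1)) x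
      = N * poly (laguerre_poly m \<alpha>) x - real (Suc m) * poly (laguerre_poly (Suc m) \<alpha>) x"
    using arg_cong[OF pCons_laguerre_poly_Suc_alpha, of "\<lambda>p. poly p x"] by (simp add: N_def)
  have "Gamma N > 0" using N by simp
  then have "N \<noteq> 0" "Gamma N \<noteq> 0" using N by linarith+
  then show ?thesis
    unfolding l0 l1 l2 xQ by (simp add: field_simps)
qed

lemma power_mult_laguerre_fun:
  assumes "x > 0"
  shows "x ^ Suc m * laguerre_fun m \<alpha> x
     = fact m / Gamma (real m + \<alpha> + 1) * (x powr (\<alpha> + real m + 1) * exp (- x) * poly (laguerre_poly m \<alpha>) x)"
proof -
  have "x powr (\<alpha> + real m + 1) = x powr \<alpha> * x ^ Suc m"
    using assms by (simp add: powr_add powr_realpow add_ac)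
  then show ?thesis by (simp add: laguerre_fun_altdef)
qed

lemma has_real_derivative_power_mult_laguerre_fun:
  assumes "\<alpha> > -1" and "x > 0"
  shows "((\<lambda>x. x ^ Suc m * laguerre_fun m \<alpha> x) has_real_derivative
           (real m + \<alpha> + 1) * (x ^ m * laguerre_fun (Suc m) \<alpha> x)) (at x)"
proof -
  define N where "N = real m + \<alpha> + 1"
  define c where "c = fact m / Gamma N"
  have "Gamma N > 0" using assms(1) by (simp add: N_def)
  then have nz: "N \<noteq> 0" "Gamma N \<noteq> 0" using assms(1) unfolding N_def by linarith+
  have "((\<lambda>x. c * (x powr ((\<alpha> + real m) + 1) * exp (- x) * poly (laguerre_poly m \<alpha>) x)) has_real_derivative
      c * (x powr (\<alpha> + real m) * exp (- x) * poly (weighted_pderiv (\<alpha> + real m) (laguerre_poly m \<alpha>)) x)) (at x)"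
    by (intro DERIV_cmult has_real_derivative_powr_exp_poly assms)
  then have "((\<lambda>x. x ^ Suc m * laguerre_fun m \<alpha> x) has_real_derivative
      c * (x powr (\<alpha> + real m) * exp (- x) * poly (weighted_pderiv (\<alpha> + real m) (laguerre_poly m \<alpha>)) x)) (at x)"
    by (rule has_field_derivative_transform_within_open[where S = "{0<..}"])
       (use assms power_mult_laguerre_fun in \<open>auto simp: c_def N_def\<close>)
  moreover have "c * (x powr (\<alpha> + real m) * exp (- x) * poly (weighted_pderiv (\<alpha> + real m) (laguerre_poly m \<alpha>)) x)
      = N * (x ^ m * laguerre_fun (Suc m) \<alpha> x)"
  proof -
    have pw: "x powr (\<alpha> + real m) = x powr \<alpha> * x ^ m"
      using assms(2) by (simp add: powr_add powr_realpow)
    have lf: "laguerre_fun (Suc m) \<alpha> x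
        = real (Suc m) * fact m / (N * Gamma N) * (x powr \<alpha> * exp (- x) * poly (laguerre_poly (Suc m) \<alpha>) x)"
      unfolding laguerre_fun_altdef N_def Gamma_Suc_plus[OF assms(1)] by simp
    show ?thesis
      using nz by (simp add: pw lf weighted_pderiv_laguerre_poly_shift c_def field_simps)
  qed
  ultimately show ?thesis by (simp add: N_def)
qed

lemma laguerre_fun_tendsto_0_at_top: "(laguerre_fun n \<beta> \<longlongrightarrow> 0) at_top"
  unfolding laguerre_fun_altdef by (intro tendsto_mult_right_zero tendsto_powr_exp_poly_at_top)

lemma laguerre_fun_tendsto_0_at_right_0:
  assumes "\<beta> > 0"
  shows "(laguerre_fun n \<beta> \<longlongrightarrow> 0) (at_right 0)"
  unfolding laguerre_fun_altdef by (intro tendsto_mult_right_zero tendsto_powr_exp_poly_at_right_0 assms)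

lemma power_mult_laguerre_fun_tendsto_0_at_top:
  "((\<lambda>x. x ^ Suc m * laguerre_fun m \<alpha> x) \<longlongrightarrow> 0) at_top"
proof -
  have "\<forall>\<^sub>F x in at_top. fact m / Gamma (real m + \<alpha> + 1) *
          (x powr (\<alpha> + real m + 1) * exp (- x) * poly (laguerre_poly m \<alpha>) x) = x ^ Suc m * laguerre_fun m \<alpha> x"
    using eventually_gt_at_top[of 0] by eventually_elim (rule power_mult_laguerre_fun[symmetric])
  moreover have "((\<lambda>x. fact m / Gamma (real m + \<alpha> + 1) *
      (x powr (\<alpha> + real m + 1) * exp (- x) * poly (laguerre_poly m \<alpha>) x)) \<longlongrightarrow> 0) at_top"
    by (intro tendsto_mult_right_zero tendsto_powr_exp_poly_at_top)
  ultimately show ?thesis by (rule Lim_transform_eventually[rotated])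
qed

lemma power_mult_laguerre_fun_tendsto_0_at_right_0:
  assumes "\<alpha> > -1"
  shows "((\<lambda>x. x ^ Suc m * laguerre_fun m \<alpha> x) \<longlongrightarrow> 0) (at_right 0)"
proof -
  have "\<forall>\<^sub>F x in at_right 0. fact m / Gamma (real m + \<alpha> + 1) *
          (x powr (\<alpha> + real m + 1) * exp (- x) * poly (laguerre_poly m \<alpha>) x) = x ^ Suc m * laguerre_fun m \<alpha> x"
    using eventually_at_right_less[of 0] by eventually_elim (rule power_mult_laguerre_fun[symmetric])
  moreover have "((\<lambda>x. fact m / Gamma (real m + \<alpha> + 1) *
      (x powr (\<alpha> + real m + 1) * exp (- x) * poly (laguerre_poly m \<alpha>) x)) \<longlongrightarrow> 0) (at_right 0)"
    using assms by (intro tendsto_mult_right_zero tendsto_powr_exp_poly_at_right_0) simp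
  ultimately show ?thesis by (rule Lim_transform_eventually[rotated])
qed

section \<open>Sign pattern between the zeros\<close>

lemma laguerre_pos_of_nonpos:
  assumes "\<alpha> > -1" and "x \<le> 0"
  shows "laguerre n \<alpha> x > 0"
proof -
  have pos: "(real n + \<alpha>) gchoose (n - k) > 0" if "k \<le> n" for k
  proof -
    have "real n + \<alpha> - real (n - k) + 1 = real k + \<alpha> + 1" using that by (simp add: of_nat_diff)
    then show ?thesis using assms(1) by (simp add: gbinomial_pochhammer' pochhammer_pos)
  qed
  have "laguerre n \<alpha> x = (\<Sum>k=0..n. ((real n + \<alpha>) gchoose (n - k)) * (- x) ^ k / fact k)"
    unfolding laguerre_def by (intro sum.cong) (auto simp: power_minus')
  also have "\<dots> > 0"
  proof (rule sum_pos2[of _ 0])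
    show "0 < ((real n + \<alpha>) gchoose (n - 0)) * (- x) ^ 0 / fact 0" using pos[of 0] by simp
    show "0 \<le> ((real n + \<alpha>) gchoose (n - k)) * (- x) ^ k / fact k" if "k \<in> {0..n}" for k
      using pos[of k] that assms(2) by simp
  qed auto
  finally show ?thesis .
qed

lemma laguerre_zeros_pos:
  assumes "\<alpha> > -1" and "laguerre n \<alpha> x = 0"
  shows "x > 0"
  using laguerre_pos_of_nonpos[OF assms(1), of x n] assms(2) by (cases "x \<le> 0") auto

lemma prod_roots_dvd:
  fixes p :: "'a::idom poly"
  assumes "finite S" and "\<And>r. r \<in> S \<Longrightarrow> poly p r = 0"
  shows "(\<Prod>r\<in>S. [:-r, 1:]) dvd p"
  using assms
proof (induction S rule: finite_induct)
  case (insert a S)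
  then obtain q where q: "p = (\<Prod>r\<in>S. [:-r, 1:]) * q" by (auto elim: dvdE)
  have "poly (\<Prod>r\<in>S. [:-r, 1:]) a \<noteq> 0" using insert by (auto simp: poly_prod)
  moreover have "poly p a = 0" using insert by auto
  ultimately obtain q' where q': "q = [:-a, 1:] * q'"
    using q by (auto simp: poly_eq_0_iff_dvd elim: dvdE)
  have "p = ([:-a, 1:] * (\<Prod>r\<in>S. [:-r, 1:])) * q'" by (simp only: q q' mult_ac)
  then show ?case using insert by (simp add: dvd_triv_left)
qed simp

lemma poly_eq_smult_lead_coeff_prod_roots:
  fixes p :: "'a::idom poly"
  assumes "finite S" and "card S = degree p" and "\<And>r. r \<in> S \<Longrightarrow> poly p r = 0"
  shows "p = smult (lead_coeff p) (\<Prod>r\<in>S. [:-r, 1:])"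
proof (cases "p = 0")
  case False
  obtain q where q: "p = (\<Prod>r\<in>S. [:-r, 1:]) * q"
    using prod_roots_dvd[OF assms(1,3)] by (auto elim: dvdE)
  have "(\<Prod>r\<in>S. [:-r, 1:]) \<noteq> (0::'a poly)" "q \<noteq> 0" using q False assms(1) by auto
  moreover have "degree (\<Prod>r\<in>S. [:-r, 1:]) = card S"
    by (subst degree_prod_eq_sum_degree) auto
  ultimately have "degree q = 0" using q assms(2) by (simp add: degree_mult_eq)
  then obtain a where "q = [:a:]" by (elim degree_eq_zeroE)
  moreover have "lead_coeff (\<Prod>r\<in>S. [:-r, 1:]) = (1::'a)" by (simp add: lead_coeff_prod)
  ultimately show ?thesis using q by (simp add: lead_coeff_mult)
qed simp

lemma laguerre_eq_prod_zeros:
  assumes "inj_on t {1..n}" and zeros: "{x. laguerre n \<alpha> x = 0} = t ` {1..n}"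
  shows "laguerre n \<alpha> x = (-1)^n / fact n * (\<Prod>i=1..n. x - t i)"
proof -
  have "laguerre_poly n \<alpha> = smult (lead_coeff (laguerre_poly n \<alpha>)) (\<Prod>r\<in>t ` {1..n}. [:-r, 1:])"
    by (rule poly_eq_smult_lead_coeff_prod_roots)
       (use assms in \<open>auto simp: card_image degree_laguerre_poly poly_laguerre_poly\<close>)
  then have "poly (laguerre_poly n \<alpha>) x = (-1)^n / fact n * (\<Prod>r\<in>t ` {1..n}. x - r)"
    unfolding lead_coeff_laguerre_poly by (simp add: poly_prod)
  also have "(\<Prod>r\<in>t ` {1..n}. x - r) = (\<Prod>i=1..n. x - t i)"
    using assms(1) by (simp add: prod.reindex)
  finally show ?thesis by (simp add: poly_laguerre_poly)
qed

lemma sign_prod_diff_between: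
  fixes t :: "nat \<Rightarrow> real"
  assumes mono: "mono_on {1..n} t" and "k \<le> n"
    and left: "1 \<le> k \<Longrightarrow> t k \<le> x" and right: "k < n \<Longrightarrow> x \<le> t (Suc k)"
  shows "0 \<le> (-1)^(n - k) * (\<Prod>i=1..n. x - t i)"
proof -
  have split: "{1..n} = {1..k} \<union> {k<..n}" using \<open>k \<le> n\<close> by auto
  have "(\<Prod>i\<in>{k<..n}. t i - x) = (\<Prod>i\<in>{k<..n}. (-1) * (x - t i))"
    by simp
  then have "(-1)^(n - k) * (\<Prod>i\<in>{k<..n}. x - t i) = (\<Prod>i\<in>{k<..n}. t i - x)"
    by (simp only: prod.distrib prod_constant card_greaterThanAtMost)
  moreover have "0 \<le> (\<Prod>i\<in>{1..k}. x - t i)"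
  proof (intro prod_nonneg)
    fix i assume "i \<in> {1..k}"
    then show "0 \<le> x - t i" using mono_onD[OF mono, of i k] left \<open>k \<le> n\<close> by auto
  qed
  moreover have "0 \<le> (\<Prod>i\<in>{k<..n}. t i - x)"
  proof (intro prod_nonneg)
    fix i assume "i \<in> {k<..n}"
    then show "0 \<le> t i - x" using mono_onD[OF mono, of "Suc k" i] right by auto
  qed
  moreover have "(\<Prod>i=1..n. x - t i) = (\<Prod>i\<in>{1..k}. x - t i) * (\<Prod>i\<in>{k<..n}. x - t i)"
    unfolding split by (rule prod.union_disjoint) auto
  ultimately show ?thesis by (metis mult.left_commute mult_nonneg_nonneg)
qed

lemma laguerre_sign_between_zeros:
  assumes "strict_mono_on {1..n} t" and "{x. laguerre n \<alpha> x = 0} = t ` {1..n}"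
    and "k \<le> n" and "1 \<le> k \<Longrightarrow> t k \<le> x" and "k < n \<Longrightarrow> x \<le> t (Suc k)"
  shows "0 \<le> (-1)^k * laguerre n \<alpha> x"
proof -
  have "(-1)^n = (-1)^(n - k) * (-1::real)^k"
    using \<open>k \<le> n\<close> by (simp flip: power_add)
  then have sign: "(-1)^k * (-1)^n = (-1::real)^(n - k)"
    by (simp flip: power_mult_distrib)
  have "(-1)^k * laguerre n \<alpha> x = (-1)^k * (-1)^n * (\<Prod>i=1..n. x - t i) / fact n"
    using laguerre_eq_prod_zeros[OF strict_mono_on_imp_inj_on[OF assms(1)] assms(2)] by simp
  also have "\<dots> = (-1)^(n - k) * (\<Prod>i=1..n. x - t i) / fact n"
    unfolding sign ..
  also have "\<dots> \<ge> 0"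
    using assms by (intro divide_nonneg_pos sign_prod_diff_between strict_mono_on_imp_mono_on) auto
  finally show ?thesis .
qed

section \<open>Improper integrals of alternating functions\<close>

lemma has_integral_of_real_deriv:
  fixes F f :: "real \<Rightarrow> real"
  assumes "a \<le> b" and "\<And>x. a \<le> x \<Longrightarrow> x \<le> b \<Longrightarrow> (F has_real_derivative f x) (at x)"
  shows "(f has_integral F b - F a) {a..b}"
  using assms
  by (intro fundamental_theorem_of_calculus)
     (auto simp: has_real_derivative_iff_has_vector_derivative[symmetric] intro: has_field_derivative_at_within)

lemma has_integral_atLeast_of_deriv_nonneg:
  fixes F f :: "real \<Rightarrow> real"
  assumes deriv: "\<And>x. a \<le> x \<Longrightarrow> (F has_real_derivative f x) (at x)"
    and nonneg: "\<And>x. a \<le> x \<Longrightarrow> 0 \<le> f x"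
    and lim: "(F \<longlongrightarrow> B) at_top"
  shows "(f has_integral B - F a) {a..}"
proof (rule has_integral_monotone_convergence_increasing)
  let ?h = "\<lambda>k x. if x \<in> {a..a + real k} then f x else 0"
  show "(?h k has_integral F (a + real k) - F a) {a..}" for k
    by (subst has_integral_restrict) (auto intro!: has_integral_of_real_deriv deriv)
  show "?h k x \<le> ?h (Suc k) x" if "x \<in> {a..}" for k x
    using that nonneg by auto
  show "(\<lambda>k. ?h k x) \<longlonglongrightarrow> f x" if "x \<in> {a..}" for x
  proof (rule tendsto_eventually)
    obtain N :: nat where "x - a \<le> real N" using real_arch_simple by blast
    then show "\<forall>\<^sub>F k in sequentially. ?h k x = f x"
      using that unfolding eventually_sequentially by (intro exI[of _ N]) auto
  qed
  have "filterlim (\<lambda>k::nat. a + real k) at_top sequentially" by real_asymp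
  then show "(\<lambda>k. F (a + real k) - F a) \<longlonglongrightarrow> B - F a"
    by (intro tendsto_diff tendsto_const filterlim_compose[OF lim])
qed

lemma has_integral_greaterThanAtMost_of_deriv_nonneg:
  fixes F f :: "real \<Rightarrow> real"
  assumes "0 < b"
    and deriv: "\<And>x. 0 < x \<Longrightarrow> x \<le> b \<Longrightarrow> (F has_real_derivative f x) (at x)"
    and nonneg: "\<And>x. 0 < x \<Longrightarrow> x \<le> b \<Longrightarrow> 0 \<le> f x"
    and lim: "(F \<longlongrightarrow> A) (at_right 0)"
  shows "(f has_integral F b - A) {0<..b}"
proof (rule has_integral_monotone_convergence_increasing)
  define p where "p k = b / (real k + 1)" for k :: nat
  have p: "0 < p k" "p k \<le> b" "p (Suc k) \<le> p k" for k
    using \<open>0 < b\<close> by (auto simp: p_def field_simps)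
  have p_lim: "filterlim p (at_right 0) sequentially"
  proof -
    have "p \<longlonglongrightarrow> 0" unfolding p_def by real_asymp
    moreover have "\<forall>\<^sub>F k in sequentially. p k \<in> {0<..}"
      using p(1) by (intro always_eventually) auto
    ultimately show ?thesis by (auto simp: filterlim_at elim: eventually_mono)
  qed
  let ?h = "\<lambda>k x. if x \<in> {p k..b} then f x else 0"
  show "(?h k has_integral F b - F (p k)) {0<..b}" for k
    using p[of k] by (subst has_integral_restrict) (auto intro!: has_integral_of_real_deriv deriv)
  show "?h k x \<le> ?h (Suc k) x" if "x \<in> {0<..b}" for k x
    using that nonneg p[of k] by auto
  show "(\<lambda>k. ?h k x) \<longlonglongrightarrow> f x" if "x \<in> {0<..b}" for x
  proof (rule tendsto_eventually)
    have "\<forall>\<^sub>F k in sequentially. p k < x"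
      using p_lim that unfolding filterlim_at by (auto dest!: order_tendstoD(2)[of p 0 sequentially x])
    then show "\<forall>\<^sub>F k in sequentially. ?h k x = f x"
      by eventually_elim (use that in auto)
  qed
  show "(\<lambda>k. F b - F (p k)) \<longlonglongrightarrow> F b - A"
    by (intro tendsto_diff tendsto_const filterlim_compose[OF lim p_lim])
qed

lemma abs_eq_minus_one_power_mult:
  fixes y :: real
  assumes "0 \<le> (-1)^k * y"
  shows "\<bar>y\<bar> = (-1)^k * y"
proof -
  have "\<bar>(-1)^k * y\<bar> = \<bar>y\<bar>" by (simp add: abs_mult)
  with assms show ?thesis by linarith
qed

lemma has_integral_abs_alternating:
  fixes f F :: "real \<Rightarrow> real" and t :: "nat \<Rightarrow> real"
  assumes "n \<ge> 1" and "0 < t 1" and mono: "mono_on {1..n} t"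
    and deriv: "\<And>x. 0 < x \<Longrightarrow> (F has_real_derivative f x) (at x)"
    and lim_0: "(F \<longlongrightarrow> 0) (at_right 0)" and lim_top: "(F \<longlongrightarrow> 0) at_top"
    and sign: "\<And>k x. k \<le> n \<Longrightarrow> 0 < x \<Longrightarrow> (1 \<le> k \<Longrightarrow> t k \<le> x) \<Longrightarrow>
                 (k < n \<Longrightarrow> x \<le> t (Suc k)) \<Longrightarrow> 0 \<le> (-1)^k * f x"
  shows "((\<lambda>x. \<bar>f x\<bar>) has_integral 2 * (\<Sum>m=1..n. (-1)^(m+1) * F (t m))) {0<..}"
proof -
  have t_pos: "0 < t k" if "k \<in> {1..n}" for k
    using mono_onD[OF mono, of 1 k] that \<open>0 < t 1\<close> \<open>n \<ge> 1\<close> by auto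
  define V where "V k = 2 * (\<Sum>m=1..<k. (-1)^(m+1) * F (t m)) + (-1)^(k+1) * F (t k)" for k
  have initial: "((\<lambda>x. \<bar>f x\<bar>) has_integral V k) {0<..t k}" if "1 \<le> k" "k \<le> n" for k
    using that
  proof (induction k rule: dec_induct)
    case base
    have "(f has_integral F (t 1) - 0) {0<..t 1}"
      using \<open>0 < t 1\<close> \<open>n \<ge> 1\<close> sign[of 0]
      by (intro has_integral_greaterThanAtMost_of_deriv_nonneg deriv lim_0) auto
    moreover have "\<bar>f x\<bar> = f x" if "x \<in> {0<..t 1}" for x
      using sign[of 0 x] that \<open>n \<ge> 1\<close> by auto
    ultimately show ?case by (subst has_integral_cong) (auto simp: V_def)
  next
    case (step k)
    have tk: "0 < t k" "t k \<le> t (Suc k)"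
      using t_pos[of k] mono_onD[OF mono, of k "Suc k"] step by auto
    have "((\<lambda>x. (-1)^k * f x) has_integral (-1)^k * F (t (Suc k)) - (-1)^k * F (t k)) {t k..t (Suc k)}"
      using tk by (intro has_integral_of_real_deriv) (auto intro!: derivative_eq_intros deriv)
    moreover have "\<bar>f x\<bar> = (-1)^k * f x" if "x \<in> {t k..t (Suc k)}" for x
      using sign[of k x] that step tk by (intro abs_eq_minus_one_power_mult) auto
    ultimately have next_piece: "((\<lambda>x. \<bar>f x\<bar>) has_integral (-1)^k * F (t (Suc k)) - (-1)^k * F (t k))
        {t k..t (Suc k)}"
      by (subst has_integral_cong) auto
    have "negligible ({0<..t k} \<inter> {t k..t (Suc k)})" by (rule negligible_subset[of "{t k}"]) auto
    from has_integral_Un[OF step.IH next_piece this] step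
    have "((\<lambda>x. \<bar>f x\<bar>) has_integral V k + ((-1)^k * F (t (Suc k)) - (-1)^k * F (t k)))
        ({0<..t k} \<union> {t k..t (Suc k)})"
      by auto
    moreover have "{0<..t k} \<union> {t k..t (Suc k)} = {0<..t (Suc k)}" using tk by auto
    moreover have "V k + ((-1)^k * F (t (Suc k)) - (-1)^k * F (t k)) = V (Suc k)"
      using step by (simp add: V_def)
    ultimately show ?case by simp
  qed
  have tn: "0 < t n" using t_pos \<open>n \<ge> 1\<close> by auto
  have "((\<lambda>x. (-1)^n * f x) has_integral 0 - (-1)^n * F (t n)) {t n..}"
    using tn sign[of n]
    by (intro has_integral_atLeast_of_deriv_nonneg)
       (auto intro!: derivative_eq_intros deriv tendsto_mult_right_zero lim_top)
  moreover have "\<bar>f x\<bar> = (-1)^n * f x" if "x \<in> {t n..}" for x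
    using sign[of n x] that tn by (intro abs_eq_minus_one_power_mult) auto
  ultimately have final: "((\<lambda>x. \<bar>f x\<bar>) has_integral 0 - (-1)^n * F (t n)) {t n..}"
    by (subst has_integral_cong) auto
  have "negligible ({0<..t n} \<inter> {t n..})" by (rule negligible_subset[of "{t n}"]) auto
  from has_integral_Un[OF initial[OF \<open>n \<ge> 1\<close> order.refl] final this]
  have "((\<lambda>x. \<bar>f x\<bar>) has_integral V n + (0 - (-1)^n * F (t n))) ({0<..t n} \<union> {t n..})"
    by auto
  moreover have "{0<..t n} \<union> {t n..} = {0<..}" using tn by auto
  moreover have "V n + (0 - (-1)^n * F (t n)) = 2 * (\<Sum>m=1..n. (-1)^(m+1) * F (t m))"
  proof -
    have "{1..n} = insert n {1..<n}" using \<open>n \<ge> 1\<close> by auto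
    then show ?thesis by (simp add: V_def)
  qed
  ultimately show ?thesis by simp
qed

lemma laguerre_fun_sign_between_zeros:
  assumes "\<alpha> > -1" and "strict_mono_on {1..n} t" and "{x. laguerre n \<alpha> x = 0} = t ` {1..n}"
    and "k \<le> n" and "0 < x" and "1 \<le> k \<Longrightarrow> t k \<le> x" and "k < n \<Longrightarrow> x \<le> t (Suc k)"
  shows "0 \<le> (-1)^k * laguerre_fun n \<alpha> x"
proof -
  have "(-1)^k * laguerre_fun n \<alpha> x
      = fact n / Gamma (real n + \<alpha> + 1) * x powr \<alpha> * exp (- x) * ((-1)^k * laguerre n \<alpha> x)"
    by (simp add: laguerre_fun_def)
  also have "\<dots> \<ge> 0"
    using assms laguerre_sign_between_zeros[OF assms(2,3,4,6,7)] by simp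
  finally show ?thesis .
qed

lemma has_integral_abs_laguerre_fun:
  assumes "\<alpha> > -1" and "strict_mono_on {1..Suc m} t"
    and zeros: "{x. laguerre (Suc m) \<alpha> x = 0} = t ` {1..Suc m}"
  shows "((\<lambda>x. \<bar>laguerre_fun (Suc m) \<alpha> x\<bar>) has_integral
           2 * (\<Sum>i=1..Suc m. (-1)^(i+1) * laguerre_fun m \<alpha> (t i))) {0<..}"
proof -
  have root: "laguerre (Suc m) \<alpha> (t i) = 0" if "i \<in> {1..Suc m}" for i
    using zeros that by blast
  have integral: "((\<lambda>x. \<bar>laguerre_fun (Suc m) \<alpha> x\<bar>) has_integral
      2 * (\<Sum>i=1..Suc m. (-1)^(i+1) * laguerre_fun m (\<alpha> + 1) (t i))) {0<..}"
  proof (rule has_integral_abs_alternating[where t = t and F = "laguerre_fun m (\<alpha> + 1)"])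
    show "0 < t 1" using laguerre_zeros_pos[OF assms(1) root[of 1]] by simp
  qed (use assms strict_mono_on_imp_mono_on laguerre_fun_sign_between_zeros
        has_real_derivative_laguerre_fun_Suc_alpha laguerre_fun_tendsto_0_at_right_0
        laguerre_fun_tendsto_0_at_top in auto)
  have "laguerre_fun m (\<alpha> + 1) (t i) = laguerre_fun m \<alpha> (t i)" if "i \<in> {1..Suc m}" for i
    using laguerre_fun_Suc_alpha[OF assms(1) laguerre_zeros_pos[OF assms(1) root[OF that]]] root[OF that]
    by (simp add: laguerre_fun_def)
  then have "(\<Sum>i=1..Suc m. (-1)^(i+1) * laguerre_fun m (\<alpha> + 1) (t i))
      = (\<Sum>i=1..Suc m. (-1)^(i+1) * laguerre_fun m \<alpha> (t i))"
    by (intro sum.cong) auto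
  with integral show ?thesis by (simp only:)
qed

lemma has_integral_power_mult_abs_laguerre_fun:
  assumes "\<alpha> > -1" and "strict_mono_on {1..Suc m} t"
    and zeros: "{x. laguerre (Suc m) \<alpha> x = 0} = t ` {1..Suc m}"
  shows "((\<lambda>x. x ^ m * \<bar>laguerre_fun (Suc m) \<alpha> x\<bar>) has_integral
           2 / (\<alpha> + real (Suc m)) * (\<Sum>i=1..Suc m. (-1)^(i+1) * t i ^ Suc m * laguerre_fun m \<alpha> (t i))) {0<..}"
proof -
  define N where "N = \<alpha> + real (Suc m)"
  have N: "N > 0" using assms(1) by (simp add: N_def)
  have root: "laguerre (Suc m) \<alpha> (t i) = 0" if "i \<in> {1..Suc m}" for i
    using zeros that by blast
  have "((\<lambda>x. \<bar>x ^ m * laguerre_fun (Suc m) \<alpha> x\<bar>) has_integral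
      2 * (\<Sum>i=1..Suc m. (-1)^(i+1) * (t i ^ Suc m * laguerre_fun m \<alpha> (t i) / N))) {0<..}"
  proof (rule has_integral_abs_alternating[where t = t and F = "\<lambda>x. x ^ Suc m * laguerre_fun m \<alpha> x / N"])
    show "0 < t 1" using laguerre_zeros_pos[OF assms(1) root[of 1]] by simp
    show "((\<lambda>x. x ^ Suc m * laguerre_fun m \<alpha> x / N) has_real_derivative x ^ m * laguerre_fun (Suc m) \<alpha> x) (at x)"
      if "0 < x" for x
      using DERIV_cdivide[OF has_real_derivative_power_mult_laguerre_fun[OF assms(1) that, where m = m], where c = N] N
      by (simp add: N_def add_ac)
    show "0 \<le> (-1)^k * (x ^ m * laguerre_fun (Suc m) \<alpha> x)"
      if "k \<le> Suc m" "0 < x" "1 \<le> k \<Longrightarrow> t k \<le> x" "k < Suc m \<Longrightarrow> x \<le> t (Suc k)" for k x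
      using laguerre_fun_sign_between_zeros[OF assms that] that(2)
      by (simp add: mult.left_commute[of _ "x ^ m"])
  qed (use assms strict_mono_on_imp_mono_on power_mult_laguerre_fun_tendsto_0_at_right_0
        power_mult_laguerre_fun_tendsto_0_at_top in \<open>auto intro: tendsto_divide_zero\<close>)
  moreover have "\<bar>x ^ m * laguerre_fun (Suc m) \<alpha> x\<bar> = x ^ m * \<bar>laguerre_fun (Suc m) \<alpha> x\<bar>"
    if "x \<in> {0<..}" for x
    using that by (simp add: abs_mult)
  moreover have "2 * (\<Sum>i=1..Suc m. (-1)^(i+1) * (t i ^ Suc m * laguerre_fun m \<alpha> (t i) / N))
      = 2 / N * (\<Sum>i=1..Suc m. (-1)^(i+1) * t i ^ Suc m * laguerre_fun m \<alpha> (t i))"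
    unfolding times_divide_eq_right sum_divide_distrib[symmetric] by (simp add: mult.assoc)
  ultimately show ?thesis
    unfolding N_def by (subst (asm) has_integral_cong) auto
qed

theorem corollary2p4:
  fixes \<alpha> :: real and n :: nat and t :: "nat \<Rightarrow> real"
  assumes "\<alpha> > -1" and "n \<ge> 1"
    and "strict_mono_on {1..n} t"
    and "{x. laguerre n \<alpha> x = 0} = t ` {1..n}"
  shows "((\<lambda>x. \<bar>laguerre_fun n \<alpha> x\<bar>) has_integral
            2 * (\<Sum>m=1..n. (-1)^(m+1) * laguerre_fun (n - 1) \<alpha> (t m))) {0<..} \<and>
         ((\<lambda>x. x ^ (n - 1) * \<bar>laguerre_fun n \<alpha> x\<bar>) has_integral
            2 / (\<alpha> + real n) * (\<Sum>m=1..n. (-1)^(m+1) * (t m) ^ n * laguerre_fun (n - 1) \<alpha> (t m))) {0<..}"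
proof -
  obtain m where n: "n = Suc m" using \<open>n \<ge> 1\<close> by (cases n) auto
  show ?thesis
    using has_integral_abs_laguerre_fun[OF assms(1,3,4)[unfolded n]]
      has_integral_power_mult_abs_laguerre_fun[OF assms(1,3,4)[unfolded n]]
    unfolding n diff_Suc_1 by (intro conjI)
qed

end
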